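(* For any parity decision tree $T$ on $\{-1,1\}^n$ of depth $d$, $$\mathbf{E}_{\ell\in T}\Big[\Big(\sum_{i=1}^n \ell_i\Big)^2\Big]\le 2d.$$
   Context: A parity decision tree on $\{-1,1\}^n$ is a rooted full binary tree whose internal nodes are labelled by subsets $S\subseteq[n]$, whose two outgoing edges are labelled $-1$ and $1$; an input $x$ follows from a node labelled $S$ the edge labelled $\prod_{i\in S}x_i$, reaching a unique leaf. Depth is the maximum number of internal nodes on a root-to-leaf path. Each leaf is represented as a vector $\ell\in\{-1,0,1\}^n$ where $\ell_i$ is the expected value of $x_i$ over uniformly random inputs $x$ that reach that leaf. $\mathbf{E}_{\ell\in T}$ denotes expectation over the leaf reached by a uniformly random input $x\in\{-1,1\}^n$ (i.e., each leaf weighted by the probability of reaching it). *)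

theory Defs
  imports Complex_Main
begin

text \<open>Parity decision trees. Coordinates are indexed by 0..n-1.
  Node S tm tp : query the parity prod_{i in S} x_i; follow tm on -1, tp on 1.\<close>
datatype pdt = Leaf | Node "nat set" pdt pdt

fun depth :: "pdt \<Rightarrow> nat" where
  "depth Leaf = 0"
| "depth (Node S tm tp) = Suc (max (depth tm) (depth tp))"

fun pdt_on :: "nat \<Rightarrow> pdt \<Rightarrow> bool" where
  "pdt_on n Leaf = True"
| "pdt_on n (Node S tm tp) = (S \<subseteq> {..<n} \<and> pdt_on n tm \<and> pdt_on n tp)"

definition cube :: "nat \<Rightarrow> (nat \<Rightarrow> real) set" where
  "cube n = {x. (\<forall>i<n. x i = -1 \<or> x i = 1) \<and> (\<forall>i\<ge>n. x i = 1)}"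

text \<open>The leaf reached by x, identified by the sequence of edges taken
  (False = edge -1, True = edge 1).\<close>
fun leaf_of :: "pdt \<Rightarrow> (nat \<Rightarrow> real) \<Rightarrow> bool list" where
  "leaf_of Leaf x = []"
| "leaf_of (Node S tm tp) x =
     (if (\<Prod>i\<in>S. x i) = 1 then True # leaf_of tp x else False # leaf_of tm x)"

definition same_leaf :: "nat \<Rightarrow> pdt \<Rightarrow> (nat \<Rightarrow> real) \<Rightarrow> (nat \<Rightarrow> real) set" where
  "same_leaf n T x = {y \<in> cube n. leaf_of T y = leaf_of T x}"

definition leaf_vec :: "nat \<Rightarrow> pdt \<Rightarrow> (nat \<Rightarrow> real) \<Rightarrow> nat \<Rightarrow> real" where
  "leaf_vec n T x i = (\<Sum>y\<in>same_leaf n T x. y i) / real (card (same_leaf n T x))"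

text \<open>E_{l in T}[ (sum_i l_i)^2 ]: expectation over the leaf reached by a uniform input.\<close>
definition leaf_expect_sq :: "nat \<Rightarrow> pdt \<Rightarrow> real" where
  "leaf_expect_sq n T =
     (\<Sum>x\<in>cube n. (\<Sum>i<n. leaf_vec n T x i)^2) / 2 ^ n"

end

theory Submission
  imports Defs "HOL-Library.FuncSet" "HOL-Library.Function_Algebras"
begin

text \<open>The inputs reaching a leaf form an affine subspace \<open>L\<close> of \<open>\<bbbF>\<^sub>2\<^sup>n\<close>, and each query
  at most halves it, so \<open>|L| \<ge> 2\<^sup>n\<^sup>-\<^sup>d\<close>. On \<open>L\<close> a parity is either constant or balanced. Hence the
  leaf vector \<open>\<ell>\<close> agrees with any \<open>x \<in> L\<close> on the coordinates fixed on \<open>L\<close> and vanishes elsewhere,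
  and the second moment \<open>E\<^sub>L[(\<Sum>i. y\<^sub>i)\<^sup>2]\<close> is the sum of \<open>x\<^sub>i x\<^sub>j\<close> over the pairs with \<open>y\<^sub>i y\<^sub>j\<close>
  constant on \<open>L\<close>. These pairs are the blocks of an equivalence relation: the block of fixed
  coordinates contributes \<open>(\<Sum>i. \<ell>\<^sub>i)\<^sup>2\<close>, every other block \<open>C\<close> contributes \<open>(\<Sum>i\<in>C. x\<^sub>i)\<^sup>2 \<ge> 2 - |C|\<close>,
  and there are at least \<open>n - d\<close> other blocks because one coordinate from each determines a point
  of \<open>L\<close>. So \<open>(\<Sum>i. \<ell>\<^sub>i)\<^sup>2 \<le> E\<^sub>L[(\<Sum>i. y\<^sub>i)\<^sup>2] - (n - 2d)\<close>; averaging over the leaves, where the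
  second moment averages to \<open>n\<close>, gives \<open>2d\<close>.\<close>

definition parity :: "nat set \<Rightarrow> (nat \<Rightarrow> real) \<Rightarrow> real" where
  "parity S y = (\<Prod>i\<in>S. y i)"

text \<open>In multiplicative notation the affine subspaces of \<open>\<bbbF>\<^sub>2\<^sup>n\<close> are the sets closed under
  \<open>u + v + w\<close>; the product is pointwise.\<close>
definition cube_affine :: "nat \<Rightarrow> (nat \<Rightarrow> real) set \<Rightarrow> bool" where
  "cube_affine n A \<longleftrightarrow> A \<subseteq> cube n \<and> (\<forall>u\<in>A. \<forall>v\<in>A. \<forall>w\<in>A. u * v * w \<in> A)"

lemma cube_affine_subset: "cube_affine n A \<Longrightarrow> A \<subseteq> cube n"
  by (simp add: cube_affine_def)

lemma cube_coord: "x \<in> cube n \<Longrightarrow> x i = -1 \<or> x i = 1"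
  by (cases "i < n") (auto simp: cube_def)

lemma cube_coord_sq: "x \<in> cube n \<Longrightarrow> x i * x i = 1"
  using cube_coord[of x n i] by auto

lemma bij_betw_cube_PiE: "bij_betw (\<lambda>x. restrict x {..<n}) (cube n) ({..<n} \<rightarrow>\<^sub>E {-1, 1})"
proof (rule bij_betw_imageI)
  show "inj_on (\<lambda>x. restrict x {..<n}) (cube n)"
  proof (rule inj_onI, rule ext)
    fix x y :: "nat \<Rightarrow> real" and i
    assume x: "x \<in> cube n" and y: "y \<in> cube n" and eq: "restrict x {..<n} = restrict y {..<n}"
    show "x i = y i"
    proof (cases "i < n")
      case True
      then show ?thesis using fun_cong[OF eq, of i] by simp
    next
      case False
      then show ?thesis using x y by (simp add: cube_def)
    qed
  qed
  show "(\<lambda>x. restrict x {..<n}) ` cube n = {..<n} \<rightarrow>\<^sub>E {-1, 1}"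
  proof
    show "(\<lambda>x. restrict x {..<n}) ` cube n \<subseteq> {..<n} \<rightarrow>\<^sub>E {-1, 1}"
    proof (rule image_subsetI)
      fix x assume "x \<in> cube n"
      then show "restrict x {..<n} \<in> {..<n} \<rightarrow>\<^sub>E {-1, 1}"
        using cube_coord by (simp add: Pi_iff)
    qed
    show "{..<n} \<rightarrow>\<^sub>E {-1, 1} \<subseteq> (\<lambda>x. restrict x {..<n}) ` cube n"
    proof
      fix f :: "nat \<Rightarrow> real" assume f: "f \<in> {..<n} \<rightarrow>\<^sub>E {-1, 1}"
      then have "f = restrict (\<lambda>i. if i < n then f i else 1) {..<n}"
        by (auto simp: PiE_def extensional_def)
      moreover have "(\<lambda>i. if i < n then f i else 1) \<in> cube n"
        using f by (auto simp: cube_def)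
      ultimately show "f \<in> (\<lambda>x. restrict x {..<n}) ` cube n" by blast
    qed
  qed
qed

lemma finite_cube: "finite (cube n)"
  using bij_betw_finite[OF bij_betw_cube_PiE] by (simp add: finite_PiE)

lemma card_cube: "card (cube n) = 2 ^ n"
  using bij_betw_same_card[OF bij_betw_cube_PiE] by (simp add: card_PiE numeral_2_eq_2)

lemma one_in_cube: "1 \<in> cube n"
  by (simp add: cube_def)

lemma parity_cube: "x \<in> cube n \<Longrightarrow> parity S x = -1 \<or> parity S x = 1"
proof (induction S rule: infinite_finite_induct)
  case (insert i S)
  then show ?case using cube_coord[OF insert.prems, of i] by (auto simp: parity_def)
qed (simp_all add: parity_def)

lemma parity_mult: "parity S (u * v) = parity S u * parity S v"
  by (simp add: parity_def prod.distrib)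

lemma parity_singleton: "parity {i} y = y i"
  by (simp add: parity_def)

lemma parity_doubleton: "i \<noteq> j \<Longrightarrow> parity {i, j} y = y i * y j"
  by (simp add: parity_def)

lemma cube_affine_cube: "cube_affine n (cube n)"
proof -
  have "u * v * w \<in> cube n" if "u \<in> cube n" "v \<in> cube n" "w \<in> cube n" for u v w
  proof -
    have "u i * v i * w i = -1 \<or> u i * v i * w i = 1" for i
      using cube_coord[OF that(1), of i] cube_coord[OF that(2), of i] cube_coord[OF that(3), of i]
      by auto
    moreover have "u i * v i * w i = 1" if "i \<ge> n" for i
      using \<open>i \<ge> n\<close> \<open>u \<in> cube n\<close> \<open>v \<in> cube n\<close> \<open>w \<in> cube n\<close> by (simp add: cube_def)
    ultimately show ?thesis by (simp add: cube_def)
  qed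
  then show ?thesis by (simp add: cube_affine_def)
qed

lemma cube_affine_finite: "cube_affine n A \<Longrightarrow> finite A"
  using finite_cube finite_subset cube_affine_subset by blast

lemma cube_affine_parity_slice:
  assumes "cube_affine n A" and "x \<in> cube n"
  shows "cube_affine n {y \<in> A. parity S y = parity S x}"
proof -
  have "c * c * c = c" if "c = -1 \<or> c = (1::real)" for c using that by auto
  then show ?thesis
    using assms parity_cube[OF assms(2), of S] by (auto simp: cube_affine_def parity_mult)
qed

lemma card_cube_parity_slices:
  assumes "A \<subseteq> cube n" and "finite A"
  shows "card A = card {y \<in> A. parity S y = 1} + card {y \<in> A. parity S y = -1}"
proof -
  have "A = {y \<in> A. parity S y = 1} \<union> {y \<in> A. parity S y = -1}"
    using assms parity_cube by blast
  also have "card \<dots> = card {y \<in> A. parity S y = 1} + card {y \<in> A. parity S y = -1}"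
    using assms(2) by (intro card_Un_disjoint) auto
  finally show ?thesis .
qed

lemma sum_parity_cube_slices:
  assumes "A \<subseteq> cube n" and "finite A"
  shows "(\<Sum>y\<in>A. parity S y) = real (card {y \<in> A. parity S y = 1}) - card {y \<in> A. parity S y = -1}"
proof -
  have "(\<Sum>y\<in>A. parity S y) = (\<Sum>y\<in>A. if parity S y = 1 then 1 else -1)"
    using assms parity_cube by (intro sum.cong) fastforce+
  also have "\<dots> = real (card {y \<in> A. parity S y = 1}) - card {y \<in> A. parity S y \<noteq> 1}"
    using assms(2) by (simp add: sum.If_cases Int_def)
  also have "{y \<in> A. parity S y \<noteq> 1} = {y \<in> A. parity S y = -1}"
    using assms parity_cube by force
  finally show ?thesis .
qed

text \<open>Multiplying by \<open>u * v\<close> is an involution of \<open>A\<close> that flips the parity.\<close>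
lemma cube_affine_parity_balanced:
  assumes A: "cube_affine n A" and "u \<in> A" "v \<in> A" and uv: "parity S u \<noteq> parity S v"
  shows "card {y \<in> A. parity S y = 1} = card {y \<in> A. parity S y = -1}"
proof -
  have cube: "u \<in> cube n" "v \<in> cube n" using assms cube_affine_subset[OF A] by auto
  have flip: "parity S u * parity S v = -1"
    using uv parity_cube[OF cube(1), of S] parity_cube[OF cube(2), of S] by auto
  have invol: "y * u * v * u * v = y" for y
    using cube_coord_sq[OF cube(1)] cube_coord_sq[OF cube(2)]
    by (simp add: fun_eq_iff algebra_simps)
  have "bij_betw (\<lambda>y. y * u * v) {y \<in> A. parity S y = 1} {y \<in> A. parity S y = -1}"
    by (rule bij_betw_byWitness[where f' = "\<lambda>y. y * u * v"])
      (use assms flip invol in \<open>auto simp: cube_affine_def parity_mult mult.assoc\<close>)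
  then show ?thesis by (rule bij_betw_same_card)
qed

lemma sum_parity_cube_affine:
  assumes A: "cube_affine n A" and x: "x \<in> A"
  shows "(\<Sum>y\<in>A. parity S y) =
    (if \<forall>y\<in>A. parity S y = parity S x then real (card A) * parity S x else 0)"
proof (cases "\<forall>y\<in>A. parity S y = parity S x")
  case False
  then obtain u where "u \<in> A" "parity S u \<noteq> parity S x" by blast
  then have balanced: "card {y \<in> A. parity S y = 1} = card {y \<in> A. parity S y = -1}"
    using cube_affine_parity_balanced[OF A _ x] by blast
  then have "(\<Sum>y\<in>A. parity S y) = 0"
    using sum_parity_cube_slices[OF cube_affine_subset[OF A] cube_affine_finite[OF A]] by simp
  with False show ?thesis by auto
qed simp

lemma card_le_twice_parity_slice:
  assumes A: "cube_affine n A" and x: "x \<in> A"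
  shows "card A \<le> 2 * card {y \<in> A. parity S y = parity S x}"
proof (cases "\<forall>y\<in>A. parity S y = parity S x")
  case False
  then obtain u where "u \<in> A" "parity S u \<noteq> parity S x" by blast
  then have balanced: "card {y \<in> A. parity S y = 1} = card {y \<in> A. parity S y = -1}"
    using cube_affine_parity_balanced[OF A _ x] by blast
  have "card A = card {y \<in> A. parity S y = 1} + card {y \<in> A. parity S y = -1}"
    using card_cube_parity_slices[OF cube_affine_subset[OF A] cube_affine_finite[OF A]] .
  moreover have "parity S x = 1 \<or> parity S x = -1"
    using x cube_affine_subset[OF A] parity_cube by blast
  ultimately show ?thesis using balanced by auto
next
  case True
  then have "{y \<in> A. parity S y = parity S x} = A" by auto
  then show ?thesis by simp
qed

definition leaf_class :: "pdt \<Rightarrow> (nat \<Rightarrow> real) set \<Rightarrow> (nat \<Rightarrow> real) \<Rightarrow> (nat \<Rightarrow> real) set" where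
  "leaf_class T A x = {y \<in> A. leaf_of T y = leaf_of T x}"

lemma leaf_class_Leaf: "leaf_class Leaf A x = A"
  by (simp add: leaf_class_def)

lemma leaf_class_Node:
  assumes "A \<subseteq> cube n" and "x \<in> cube n"
  shows "leaf_class (Node S tm tp) A x =
    leaf_class (if parity S x = 1 then tp else tm) {y \<in> A. parity S y = parity S x} x"
proof -
  have "parity S y = parity S x \<longleftrightarrow> (parity S y = 1 \<longleftrightarrow> parity S x = 1)" if "y \<in> A" for y
    using that assms parity_cube[OF assms(2), of S] parity_cube[of y n S] by auto
  then show ?thesis
    by (auto simp: leaf_class_def parity_def[symmetric])
qed

lemma cube_affine_leaf_class:
  "cube_affine n A \<Longrightarrow> x \<in> A \<Longrightarrow> cube_affine n (leaf_class T A x)"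
proof (induction T arbitrary: A)
  case (Node S tm tp)
  have A: "A \<subseteq> cube n" and x: "x \<in> cube n" using Node.prems cube_affine_subset by blast+
  define A' where "A' = {y \<in> A. parity S y = parity S x}"
  have "cube_affine n A'"
    unfolding A'_def by (rule cube_affine_parity_slice[OF Node.prems(1) x])
  moreover have "x \<in> A'" using Node.prems(2) by (simp add: A'_def)
  ultimately show ?case
    unfolding leaf_class_Node[OF A x] A'_def[symmetric] using Node.IH by simp
qed (simp add: leaf_class_Leaf)

lemma card_le_leaf_class:
  "cube_affine n A \<Longrightarrow> x \<in> A \<Longrightarrow> card A \<le> card (leaf_class T A x) * 2 ^ depth T"
proof (induction T arbitrary: A)
  case (Node S tm tp)
  define A' where "A' = {y \<in> A. parity S y = parity S x}"
  define T' where "T' = (if parity S x = 1 then tp else tm)"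
  have A: "A \<subseteq> cube n" and x: "x \<in> cube n" using Node.prems cube_affine_subset by blast+
  have A': "cube_affine n A'" "x \<in> A'"
    using cube_affine_parity_slice[OF Node.prems(1) x, of S] Node.prems(2) by (simp_all add: A'_def)
  have "card A \<le> 2 * card A'"
    unfolding A'_def by (rule card_le_twice_parity_slice[OF Node.prems])
  also have "card A' \<le> card (leaf_class T' A' x) * 2 ^ depth T'"
    using Node.IH[OF A'] by (simp add: T'_def)
  also have "2 * (card (leaf_class T' A' x) * 2 ^ depth T')
      \<le> card (leaf_class T' A' x) * 2 ^ depth (Node S tm tp)"
    by (simp add: T'_def)
  finally show ?case
    by (simp add: leaf_class_Node[OF A x] A'_def T'_def)
qed (simp add: leaf_class_Leaf)

text \<open>In additive notation \<open>relcoord L x i y\<close> is \<open>(y - x)\<^sub>i\<close>.\<close>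
definition relcoord :: "(nat \<Rightarrow> real) set \<Rightarrow> (nat \<Rightarrow> real) \<Rightarrow> nat \<Rightarrow> (nat \<Rightarrow> real) \<Rightarrow> real" where
  "relcoord L x i = restrict (\<lambda>y. y i * x i) L"

lemma relcoord_eq_iff:
  assumes "L \<subseteq> cube n" and "x \<in> L"
  shows "relcoord L x i = relcoord L x j \<longleftrightarrow> (\<forall>y\<in>L. y i * y j = x i * x j)"
proof -
  have "y i * x i = y j * x j \<longleftrightarrow> y i * y j = x i * x j" if "y \<in> L" for y
  proof -
    have "y \<in> cube n" "x \<in> cube n" using that assms by auto
    then show ?thesis
      using cube_coord[of y n i] cube_coord[of y n j] cube_coord[of x n i] cube_coord[of x n j]
      by auto
  qed
  then show ?thesis by (auto simp: relcoord_def restrict_def fun_eq_iff)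
qed

lemma sum_coord_cube_affine:
  assumes "cube_affine n L" and "x \<in> L"
  shows "(\<Sum>y\<in>L. y i) = (if \<forall>y\<in>L. y i = x i then real (card L) * x i else 0)"
  using sum_parity_cube_affine[OF assms, of "{i}"] by (simp add: parity_singleton)

lemma sum_coord_product_cube_affine:
  assumes L: "cube_affine n L" and x: "x \<in> L"
  shows "(\<Sum>y\<in>L. y i * y j) =
    real (card L) * (if relcoord L x i = relcoord L x j then x i * x j else 0)"
proof (cases "i = j")
  case True
  have "y i * y j = 1" if "y \<in> L" for y
    using True cube_coord_sq[of y n i] that cube_affine_subset[OF L] by auto
  then show ?thesis using True x by simp
next
  case False
  then show ?thesis
    using sum_parity_cube_affine[OF assms, of "{i, j}"] relcoord_eq_iff[OF cube_affine_subset[OF L] x]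
    by (simp add: parity_doubleton)
qed

lemma sum_sum_sq_cube_affine:
  assumes "cube_affine n L" and "x \<in> L"
  shows "(\<Sum>y\<in>L. (\<Sum>i\<in>I. y i)\<^sup>2) =
    real (card L) * (\<Sum>i\<in>I. \<Sum>j\<in>I. if relcoord L x i = relcoord L x j then x i * x j else 0)"
proof -
  have "(\<Sum>y\<in>L. (\<Sum>i\<in>I. y i)\<^sup>2) = (\<Sum>i\<in>I. \<Sum>j\<in>I. \<Sum>y\<in>L. y i * y j)"
    unfolding power2_eq_square sum_product by (simp add: sum.swap[of _ L])
  then show ?thesis
    by (simp add: sum_coord_product_cube_affine[OF assms] sum_distrib_left)
qed

text \<open>A point of \<open>L\<close> is determined by its relative coordinates at one free coordinate per
  relcoord class.\<close>
lemma card_le_two_pow_relcoord_image: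
  assumes L: "L \<subseteq> cube n" and x: "x \<in> L"
  defines "N \<equiv> {i. i < n \<and> (\<exists>y\<in>L. y i \<noteq> x i)}"
  shows "card L \<le> 2 ^ card (relcoord L x ` N)"
proof -
  let ?R = "relcoord L x ` N"
  have finR: "finite ?R" by (simp add: N_def)
  have inj: "inj_on (\<lambda>y. \<lambda>s\<in>?R. s y) L"
  proof (rule inj_onI, rule ext)
    fix y z k assume y: "y \<in> L" and z: "z \<in> L" and eq: "(\<lambda>s\<in>?R. s y) = (\<lambda>s\<in>?R. s z)"
    have yz: "y \<in> cube n" "z \<in> cube n" using y z L by auto
    show "y k = z k"
    proof (cases "k \<in> N")
      case True
      then have "relcoord L x k y = relcoord L x k z"
        using fun_cong[OF eq, of "relcoord L x k"] by simp
      then show ?thesis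
        using y z x L cube_coord[OF yz(1), of k] cube_coord[OF yz(2), of k] cube_coord[of x n k]
        by (auto simp: relcoord_def)
    next
      case False
      show ?thesis
      proof (cases "k < n")
        case True
        with False have "\<forall>w\<in>L. w k = x k" by (simp add: N_def)
        then show ?thesis using y z by metis
      next
        case False
        then show ?thesis using yz by (simp add: cube_def)
      qed
    qed
  qed
  have "(\<lambda>y. \<lambda>s\<in>?R. s y) ` L \<subseteq> ?R \<rightarrow>\<^sub>E {-1, 1}"
  proof (rule image_subsetI)
    fix y assume y: "y \<in> L"
    have "y \<in> cube n" "x \<in> cube n" using y x L by auto
    then have "relcoord L x k y \<in> {-1, 1}" for k
      using y cube_coord[of y n k] cube_coord[of x n k] by (auto simp: relcoord_def)
    then show "(\<lambda>s\<in>?R. s y) \<in> ?R \<rightarrow>\<^sub>E {-1, 1}" by auto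
  qed
  then have "card L \<le> card (?R \<rightarrow>\<^sub>E {-1 :: real, 1})"
    using finR by (intro card_inj_on_le[OF inj]) (auto intro: finite_PiE)
  also have "\<dots> = 2 ^ card ?R"
    using finR by (simp add: card_PiE numeral_2_eq_2)
  finally show ?thesis .
qed

lemma sum_sq_ge_two_minus_card:
  fixes x :: "'a \<Rightarrow> real"
  assumes "finite C" and "C \<noteq> {}" and "\<forall>i\<in>C. x i * x i = 1"
  shows "2 - real (card C) \<le> (\<Sum>i\<in>C. x i)\<^sup>2"
proof (cases "card C = 1")
  case True
  then obtain a where "C = {a}" by (rule card_1_singletonE)
  then show ?thesis using assms by (simp add: power2_eq_square)
next
  case False
  moreover have "card C > 0" using assms by (simp add: card_gt_0_iff)
  ultimately have "2 - real (card C) \<le> 0" by simp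
  also have "0 \<le> (\<Sum>i\<in>C. x i)\<^sup>2" by simp
  finally show ?thesis .
qed

text \<open>Grouping the indices into the fibres of \<open>g\<close> turns the double sum into a sum of squares.\<close>
lemma sum_same_fibre_products_ge:
  fixes x :: "'a \<Rightarrow> real" and g :: "'a \<Rightarrow> 'b"
  assumes N: "finite N" and x: "\<forall>i\<in>N. x i * x i = 1"
  shows "2 * real (card (g ` N)) - real (card N)
    \<le> (\<Sum>i\<in>N. \<Sum>j\<in>N. if g i = g j then x i * x j else 0)"
proof -
  let ?C = "\<lambda>s. {i \<in> N. g i = s}"
  have row: "(\<Sum>j\<in>N. if g i = g j then x i * x j else 0) = x i * (\<Sum>j\<in>?C (g i). x j)" for i
  proof -
    have "(\<Sum>j\<in>N. if g i = g j then x i * x j else 0) = (\<Sum>j\<in>N. if g j = g i then x i * x j else 0)"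
      by (intro sum.cong) auto
    also have "\<dots> = (\<Sum>j\<in>?C (g i). x i * x j)"
      using N by (simp add: sum.inter_filter)
    finally show ?thesis by (simp add: sum_distrib_left)
  qed
  have "(\<Sum>i\<in>N. \<Sum>j\<in>N. if g i = g j then x i * x j else 0) = (\<Sum>i\<in>N. x i * (\<Sum>j\<in>?C (g i). x j))"
    by (simp add: row)
  also have "\<dots> = (\<Sum>s\<in>g ` N. \<Sum>i\<in>?C s. x i * (\<Sum>j\<in>?C (g i). x j))"
    by (rule sum.group[symmetric]) (use N in auto)
  also have "\<dots> = (\<Sum>s\<in>g ` N. \<Sum>i\<in>?C s. x i * (\<Sum>j\<in>?C s. x j))"
    by (intro sum.cong refl) auto
  also have "\<dots> = (\<Sum>s\<in>g ` N. (\<Sum>i\<in>?C s. x i)\<^sup>2)"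
    by (simp add: power2_eq_square sum_distrib_right)
  finally have sq: "(\<Sum>i\<in>N. \<Sum>j\<in>N. if g i = g j then x i * x j else 0) = \<dots>" .
  have "real (card N) = (\<Sum>s\<in>g ` N. real (card (?C s)))"
    using sum.group[of N "g ` N" g "\<lambda>_. 1 :: real"] N by simp
  then have "2 * real (card (g ` N)) - real (card N) = (\<Sum>s\<in>g ` N. 2 - real (card (?C s)))"
    by (simp add: sum_subtractf)
  also have "\<dots> \<le> (\<Sum>s\<in>g ` N. (\<Sum>i\<in>?C s. x i)\<^sup>2)"
    using N x by (intro sum_mono sum_sq_ge_two_minus_card) auto
  finally show ?thesis using sq by simp
qed

lemma sum_sum_block_diagonal:
  assumes "finite A" and "finite B" and "A \<inter> B = {}"
    and "\<forall>i\<in>A. \<forall>j\<in>B. h i j = 0 \<and> h j i = 0"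
  shows "(\<Sum>i\<in>A \<union> B. \<Sum>j\<in>A \<union> B. h i j) = (\<Sum>i\<in>A. \<Sum>j\<in>A. h i j) + (\<Sum>i\<in>B. \<Sum>j\<in>B. h i j)"
  using assms by (simp add: sum.union_disjoint)

text \<open>Fixed and free coordinates never share a relcoord class, so the second moment splits into
  a fixed block, the squared mean, and a free block, which the rank bound makes large.\<close>
lemma cube_affine_sq_mean_le:
  assumes L: "cube_affine n L" and x: "x \<in> L" and big: "2 ^ n \<le> card L * 2 ^ d"
  shows "(\<Sum>i<n. (\<Sum>y\<in>L. y i) / real (card L))\<^sup>2
    \<le> (\<Sum>y\<in>L. (\<Sum>i<n. y i)\<^sup>2) / real (card L) - (real n - 2 * real d)"
proof -
  define \<rho> where "\<rho> = relcoord L x"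
  define F where "F = {i \<in> {..<n}. \<forall>y\<in>L. y i = x i}"
  define N where "N = {i \<in> {..<n}. \<exists>y\<in>L. y i \<noteq> x i}"
  define h where "h i j = (if \<rho> i = \<rho> j then x i * x j else 0)" for i j
  have Lcube: "L \<subseteq> cube n" and cardL: "card L > 0"
    using x cube_affine_subset[OF L] cube_affine_finite[OF L] by (auto simp: card_gt_0_iff)
  have x_sq: "x i * x i = 1" for i using x Lcube cube_coord_sq by blast
  have FN: "{..<n} = F \<union> N" "F \<inter> N = {}" by (auto simp: F_def N_def)
  have \<rho>_fixed: "\<rho> i = \<rho> j \<longleftrightarrow> j \<in> F" if i: "i \<in> F" and j: "j < n" for i j
  proof -
    have "x i \<noteq> 0" using x_sq[of i] by auto
    then have "(\<forall>y\<in>L. y i * y j = x i * x j) \<longleftrightarrow> (\<forall>y\<in>L. y j = x j)"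
      using i by (auto simp: F_def)
    then show ?thesis
      using j by (simp add: \<rho>_def relcoord_eq_iff[OF Lcube x] F_def)
  qed
  have "(\<Sum>i<n. (\<Sum>y\<in>L. y i) / real (card L)) = (\<Sum>i<n. if \<forall>y\<in>L. y i = x i then x i else 0)"
    using cardL by (intro sum.cong) (simp_all add: sum_coord_cube_affine[OF L x])
  also have "\<dots> = (\<Sum>i\<in>F. x i)"
    unfolding F_def by (rule sum.inter_filter[symmetric]) simp
  finally have mean: "(\<Sum>i<n. (\<Sum>y\<in>L. y i) / real (card L)) = (\<Sum>i\<in>F. x i)" .
  have "(\<Sum>y\<in>L. (\<Sum>i<n. y i)\<^sup>2) = real (card L) * (\<Sum>i<n. \<Sum>j<n. h i j)"
    unfolding h_def \<rho>_def by (rule sum_sum_sq_cube_affine[OF L x])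
  then have "(\<Sum>y\<in>L. (\<Sum>i<n. y i)\<^sup>2) / real (card L) = (\<Sum>i<n. \<Sum>j<n. h i j)"
    using cardL by simp
  also have "\<dots> = (\<Sum>i\<in>F. \<Sum>j\<in>F. h i j) + (\<Sum>i\<in>N. \<Sum>j\<in>N. h i j)"
  proof -
    have "\<rho> i \<noteq> \<rho> j" if "i \<in> F" "j \<in> N" for i j
      using that \<rho>_fixed[of i j] by (auto simp: N_def F_def)
    then have "\<forall>i\<in>F. \<forall>j\<in>N. h i j = 0 \<and> h j i = 0"
      by (metis h_def)
    then show ?thesis
      unfolding FN(1) using FN(2) by (intro sum_sum_block_diagonal) (auto simp: F_def N_def)
  qed
  also have "(\<Sum>i\<in>F. \<Sum>j\<in>F. h i j) = (\<Sum>i\<in>F. \<Sum>j\<in>F. x i * x j)"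
    using \<rho>_fixed by (intro sum.cong refl) (auto simp: h_def F_def)
  also have "\<dots> = (\<Sum>i\<in>F. x i)\<^sup>2"
    by (simp add: power2_eq_square sum_product)
  finally have second: "(\<Sum>y\<in>L. (\<Sum>i<n. y i)\<^sup>2) / real (card L)
      = (\<Sum>i\<in>F. x i)\<^sup>2 + (\<Sum>i\<in>N. \<Sum>j\<in>N. h i j)" .
  have free: "2 * real (card (\<rho> ` N)) - real (card N) \<le> (\<Sum>i\<in>N. \<Sum>j\<in>N. h i j)"
    unfolding h_def using x_sq by (intro sum_same_fibre_products_ge) (auto simp: N_def)
  have "card L \<le> 2 ^ card (\<rho> ` N)"
    using card_le_two_pow_relcoord_image[OF Lcube x] by (simp add: \<rho>_def N_def)
  with big have "(2::nat) ^ n \<le> 2 ^ card (\<rho> ` N) * 2 ^ d"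
    by (meson le_trans mult_le_mono1)
  then have "n \<le> card (\<rho> ` N) + d" by (simp flip: power_add)
  then have "real n \<le> real (card (\<rho> ` N)) + real d" by (metis of_nat_add of_nat_le_iff)
  moreover have "real (card N) \<le> real n" using card_mono[of "{..<n}" N] by (auto simp: N_def)
  ultimately show ?thesis unfolding mean second using free by linarith
qed

lemma sum_fibre_averages:
  fixes h :: "'a \<Rightarrow> real" and g :: "'a \<Rightarrow> 'b"
  assumes A: "finite A"
  shows "(\<Sum>x\<in>A. (\<Sum>y\<in>{y \<in> A. g y = g x}. h y) / real (card {y \<in> A. g y = g x})) = (\<Sum>x\<in>A. h x)"
proof -
  let ?C = "\<lambda>s. {y \<in> A. g y = s}"
  let ?avg = "\<lambda>s. (\<Sum>y\<in>?C s. h y) / real (card (?C s))"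
  have "(\<Sum>x\<in>A. ?avg (g x)) = (\<Sum>s\<in>g ` A. \<Sum>x\<in>?C s. ?avg (g x))"
    by (rule sum.group[symmetric]) (use A in auto)
  also have "\<dots> = (\<Sum>s\<in>g ` A. real (card (?C s)) * ?avg s)"
    by (intro sum.cong refl) auto
  also have "\<dots> = (\<Sum>s\<in>g ` A. \<Sum>y\<in>?C s. h y)"
    using A by (intro sum.cong refl) (auto simp: card_gt_0_iff)
  also have "\<dots> = (\<Sum>x\<in>A. h x)"
    by (rule sum.group) (use A in auto)
  finally show ?thesis .
qed

lemma sum_sum_sq_cube: "(\<Sum>y\<in>cube n. (\<Sum>i<n. y i)\<^sup>2) = 2 ^ n * real n"
proof -
  have diag: "relcoord (cube n) 1 i = relcoord (cube n) 1 j \<longleftrightarrow> i = j" if "i < n" "j < n" for i j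
  proof
    let ?z = "(1 :: nat \<Rightarrow> real)(i := -1)"
    assume "relcoord (cube n) 1 i = relcoord (cube n) 1 j"
    then have "\<forall>y\<in>cube n. y i * y j = 1"
      using relcoord_eq_iff[OF subset_refl one_in_cube] by simp
    moreover have "?z \<in> cube n" using that by (auto simp: cube_def)
    ultimately have "?z i * ?z j = 1" by blast
    then show "i = j" by (simp split: if_splits)
  qed simp
  have "(\<Sum>i<n. \<Sum>j<n. if relcoord (cube n) 1 i = relcoord (cube n) 1 j then 1 i * 1 j else 0)
      = (\<Sum>i<n. \<Sum>j<n. if i = j then 1 else 0 :: real)"
    using diag by (intro sum.cong refl) simp
  then show ?thesis
    by (simp add: sum_sum_sq_cube_affine[OF cube_affine_cube one_in_cube] card_cube)
qed

lemma leaf_vec_sum_sq_le: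
  assumes x: "x \<in> cube n"
  shows "(\<Sum>i<n. leaf_vec n T x i)\<^sup>2
    \<le> (\<Sum>y\<in>same_leaf n T x. (\<Sum>i<n. y i)\<^sup>2) / real (card (same_leaf n T x))
      - (real n - 2 * real (depth T))"
proof -
  have L: "same_leaf n T x = leaf_class T (cube n) x"
    by (simp add: same_leaf_def leaf_class_def)
  have xL: "x \<in> leaf_class T (cube n) x"
    using x by (simp add: leaf_class_def)
  have "2 ^ n \<le> card (leaf_class T (cube n) x) * 2 ^ depth T"
    using card_le_leaf_class[OF cube_affine_cube x, of T] by (simp add: card_cube)
  from cube_affine_sq_mean_le[OF cube_affine_leaf_class[OF cube_affine_cube x] xL this]
  show ?thesis unfolding leaf_vec_def L .
qed

theorem lemma1:
  fixes n d :: nat and T :: pdt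
  assumes "pdt_on n T" and "depth T = d"
  shows "leaf_expect_sq n T \<le> 2 * real d"
proof -
  let ?f = "\<lambda>y :: nat \<Rightarrow> real. (\<Sum>i<n. y i)\<^sup>2"
  let ?avg = "\<lambda>x. (\<Sum>y\<in>same_leaf n T x. ?f y) / real (card (same_leaf n T x))"
  have "(\<Sum>x\<in>cube n. (\<Sum>i<n. leaf_vec n T x i)\<^sup>2) \<le> (\<Sum>x\<in>cube n. ?avg x - (real n - 2 * real d))"
    using leaf_vec_sum_sq_le[of _ n T] assms(2) by (intro sum_mono) simp
  also have "\<dots> = (\<Sum>x\<in>cube n. ?avg x) - 2 ^ n * (real n - 2 * real d)"
    by (simp add: sum_subtractf card_cube)
  also have "(\<Sum>x\<in>cube n. ?avg x) = 2 ^ n * real n"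
    unfolding same_leaf_def sum_fibre_averages[OF finite_cube] by (rule sum_sum_sq_cube)
  finally have "(\<Sum>x\<in>cube n. (\<Sum>i<n. leaf_vec n T x i)\<^sup>2) \<le> 2 ^ n * (2 * real d)"
    by (simp add: algebra_simps)
  then show ?thesis unfolding leaf_expect_sq_def by (simp add: divide_le_eq mult.commute)
qed

end
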